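(* Let $m$ be a positive integer and let $\phi_m$ be the unique root of $\phi^{m+1}+\phi^m-1=0$ in $(0,1)$. Then $\theta=\phi_m^2$ is the unique solution in $(0,1)$ of the equation $L_m(\theta)=L_{m+1}(\theta)$.
   Context: $\lg$ denotes $\log_2$. For a positive integer $m$ and $0<\theta<1$, $$L_m(\theta)=\begin{cases}1+\lg m+\dfrac{\theta^{m/2}}{1-\theta^{m/2}}, & m=2^\beta \text{ for some integer } \beta\ge0,\\[2mm] 1+\lfloor\lg m\rfloor+\dfrac{\theta^{(2^{\lceil\lg m\rceil}-m)/2}}{1-\theta^{m/2}}, & \text{otherwise.}\end{cases}$$ (This is the asymptotic average code length of the modified Rice-Golomb code with parameter $m$ for Laplace-distributed residuals with parameter $\theta$.) *)

theory Defs
  imports Complex_Main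
begin

text \<open>Asymptotic average code length of the modified Rice-Golomb code with
parameter m for Laplace-distributed residuals with parameter theta (0 < theta < 1).
lg = log 2.\<close>
definition L :: "nat \<Rightarrow> real \<Rightarrow> real" where
  "L m \<theta> =
     (if (\<exists>\<beta>::nat. m = 2 ^ \<beta>)
      then 1 + log 2 (real m) + \<theta> powr (real m / 2) / (1 - \<theta> powr (real m / 2))
      else 1 + real_of_int \<lfloor>log 2 (real m)\<rfloor>
             + \<theta> powr ((2 ^ nat \<lceil>log 2 (real m)\<rceil> - real m) / 2)
               / (1 - \<theta> powr (real m / 2)))"

end

theory Submission
  imports Defs
begin

text \<open>Substituting \<open>\<theta> = t\<^sup>2\<close> turns every \<open>\<theta> powr (n/2)\<close> in \<open>L\<close> into \<open>t ^ n\<close>. If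
  \<open>2 ^ k \<le> m < 2 ^ (k + 1)\<close>, then both \<open>L m\<close> and \<open>L (m + 1)\<close> take the form
  \<open>1 + k + t ^ e / (1 - t ^ n)\<close> with the same \<open>k\<close> (for \<open>m + 1 = 2 ^ (k + 1)\<close> this uses
  \<open>1 + t ^ n / (1 - t ^ n) = 1 / (1 - t ^ n)\<close>), and the exponents \<open>e\<close> differ by one.
  Clearing denominators, \<open>L m (t\<^sup>2) = L (m + 1) (t\<^sup>2)\<close> becomes
  \<open>(1 - t) (t ^ (m + 1) + t ^ m - 1) = 0\<close>; since \<open>t ^ (m + 1) + t ^ m\<close> is strictly
  increasing, its unique root in \<open>(0, 1)\<close> is \<open>\<phi>\<close>.\<close>

lemma sq_powr_half:
  fixes t :: real
  assumes "0 < t"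
  shows "(t\<^sup>2) powr (real n / 2) = t ^ n"
proof -
  have "(t\<^sup>2) powr (real n / 2) = (t powr 2) powr (real n / 2)"
    using assms by (simp add: powr_realpow)
  also have "\<dots> = t powr real n" by (simp add: powr_powr)
  also have "\<dots> = t ^ n" using assms by (simp add: powr_realpow)
  finally show ?thesis .
qed

lemma L_sq_dyadic_left_closed:
  fixes t :: real
  assumes "2 ^ k \<le> m" "m < 2 ^ (k + 1)" "0 < t"
  shows "L m (t\<^sup>2) = 1 + real k + t ^ (2 ^ (k + 1) - m) / (1 - t ^ m)"
proof -
  have "0 < m" using assms(1) by (metis not_gr0 le_zero_eq power_not_zero zero_neq_numeral)
  have floor_log: "\<lfloor>log 2 (real m)\<rfloor> = int k"
    using floor_log_nat_eq_if[of 2 k m] assms by simp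
  show ?thesis
  proof (cases "\<exists>\<beta>::nat. m = 2 ^ \<beta>")
    case True
    then obtain \<beta> where \<beta>: "m = 2 ^ \<beta>" by auto
    have "k \<le> \<beta>" using assms(1) \<beta> by (simp add: power_le_imp_le_exp)
    moreover have "\<beta> < k + 1" using assms(2) \<beta> power_less_imp_less_exp[of 2 \<beta> "k + 1"] by simp
    ultimately have "\<beta> = k" by simp
    then have lg: "log 2 (real m) = k" and gap: "2 ^ (k + 1) - m = m"
      using \<beta> by (simp_all add: log_nat_power)
    have "L m (t\<^sup>2) = 1 + log 2 (real m) + (t\<^sup>2) powr (real m / 2) / (1 - (t\<^sup>2) powr (real m / 2))"
      unfolding L_def by (rule if_P[OF True])
    also have "\<dots> = 1 + real k + t ^ (2 ^ (k + 1) - m) / (1 - t ^ m)"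
      by (simp only: lg gap sq_powr_half[OF assms(3)])
    finally show ?thesis .
  next
    case False
    then have "2 ^ k < m" using assms(1) le_neq_implies_less by blast
    then have "\<lceil>log 2 (real m)\<rceil> = int k + 1"
      using ceiling_log_nat_eq_powr_iff[of 2 m k] assms(2) \<open>0 < m\<close> by simp
    then have gap: "2 ^ nat \<lceil>log 2 (real m)\<rceil> - real m = real (2 ^ (k + 1) - m)"
      using assms(2) by (simp add: of_nat_diff nat_add_distrib)
    have "L m (t\<^sup>2) = 1 + real_of_int \<lfloor>log 2 (real m)\<rfloor>
        + (t\<^sup>2) powr ((2 ^ nat \<lceil>log 2 (real m)\<rceil> - real m) / 2) / (1 - (t\<^sup>2) powr (real m / 2))"
      unfolding L_def by (rule if_not_P[OF False])
    also have "\<dots> = 1 + real k + t ^ (2 ^ (k + 1) - m) / (1 - t ^ m)"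
      by (simp only: floor_log gap sq_powr_half[OF assms(3)] of_int_of_nat_eq)
    finally show ?thesis .
  qed
qed

lemma L_sq_dyadic_right_closed:
  fixes t :: real
  assumes "2 ^ k < m" "m \<le> 2 ^ (k + 1)" "0 < t" "t < 1"
  shows "L m (t\<^sup>2) = 1 + real k + t ^ (2 ^ (k + 1) - m) / (1 - t ^ m)"
proof (cases "m = 2 ^ (k + 1)")
  case True
  have "t ^ m < 1" using assms(1,3,4) by (simp add: power_less_one_iff)
  moreover have "2 ^ (k + 1 + 1) - m = m" "2 ^ (k + 1) - m = 0" using True by simp_all
  moreover have "L m (t\<^sup>2) = 1 + real (k + 1) + t ^ (2 ^ (k + 1 + 1) - m) / (1 - t ^ m)"
    by (rule L_sq_dyadic_left_closed) (use True assms(3) in simp_all)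
  ultimately show ?thesis by (simp add: field_simps)
next
  case False
  then show ?thesis using assms L_sq_dyadic_left_closed[of k m t] by simp
qed

lemma L_sq_eq_L_Suc_iff:
  fixes t :: real
  assumes "0 < t" "t < 1" "1 \<le> m"
  shows "L m (t\<^sup>2) = L (m + 1) (t\<^sup>2) \<longleftrightarrow> t ^ (m + 1) + t ^ m = 1"
proof -
  obtain k where k: "2 ^ k \<le> m" "m < 2 ^ (k + 1)" using ex_power_ivl1[of 2 m] assms(3) by auto
  define e where "e = 2 ^ (k + 1) - (m + 1)"
  have "2 ^ (k + 1) - m = e + 1" using k(2) unfolding e_def by linarith
  then have L_m: "L m (t\<^sup>2) = 1 + real k + t ^ (e + 1) / (1 - t ^ m)"
    using L_sq_dyadic_left_closed[OF k assms(1)] by simp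
  have L_Suc: "L (m + 1) (t\<^sup>2) = 1 + real k + t ^ e / (1 - t ^ (m + 1))"
    unfolding e_def by (rule L_sq_dyadic_right_closed) (use k assms(1,2) in auto)
  have "t ^ m < 1" "t ^ (m + 1) < 1"
    using assms power_less_one_iff[of t m] power_less_one_iff[of t "m + 1"] by simp_all
  then have "L m (t\<^sup>2) = L (m + 1) (t\<^sup>2) \<longleftrightarrow>
      t ^ (e + 1) * (1 - t ^ (m + 1)) = t ^ e * (1 - t ^ m)"
    unfolding L_m L_Suc by (simp add: frac_eq_eq)
  also have "\<dots> \<longleftrightarrow> t ^ e * ((1 - t) * (t ^ (m + 1) + t ^ m - 1)) = 0"
    by (simp add: algebra_simps)
  also have "\<dots> \<longleftrightarrow> t ^ (m + 1) + t ^ m = 1"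
    using assms(1,2) by simp
  finally show ?thesis .
qed

lemma power_Suc_add_power_strict_mono:
  fixes s t :: real
  assumes "0 < s" "s < t"
  shows "s ^ (m + 1) + s ^ m < t ^ (m + 1) + t ^ m"
  using power_strict_mono[of s t "m + 1"] power_mono[of s t m] assms by simp

lemma power_Suc_add_power_inj:
  fixes s t :: real
  assumes "0 < s" "0 < t" "s ^ (m + 1) + s ^ m = t ^ (m + 1) + t ^ m"
  shows "s = t"
  using power_Suc_add_power_strict_mono[of s t m] power_Suc_add_power_strict_mono[of t s m] assms
  by (cases s t rule: linorder_cases) auto

theorem lemma3:
  fixes m :: nat and \<phi> :: real
  assumes "m \<ge> 1"
    and "0 < \<phi>" and "\<phi> < 1"
    and "\<phi> ^ (m + 1) + \<phi> ^ m - 1 = 0"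
  shows "0 < \<phi>\<^sup>2 \<and> \<phi>\<^sup>2 < 1 \<and> L m (\<phi>\<^sup>2) = L (m + 1) (\<phi>\<^sup>2) \<and>
         (\<forall>\<theta>::real. 0 < \<theta> \<and> \<theta> < 1 \<and> L m \<theta> = L (m + 1) \<theta> \<longrightarrow> \<theta> = \<phi>\<^sup>2)"
proof (intro conjI allI impI)
  have \<phi>_root: "\<phi> ^ (m + 1) + \<phi> ^ m = 1" using assms(4) by simp
  show "0 < \<phi>\<^sup>2" "\<phi>\<^sup>2 < 1" using assms(2,3) by (simp_all add: power_less_one_iff)
  show "L m (\<phi>\<^sup>2) = L (m + 1) (\<phi>\<^sup>2)" using L_sq_eq_L_Suc_iff[OF assms(2,3,1)] \<phi>_root by simp
  fix \<theta> :: real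
  assume \<theta>: "0 < \<theta> \<and> \<theta> < 1 \<and> L m \<theta> = L (m + 1) \<theta>"
  define t where "t = sqrt \<theta>"
  have \<theta>_eq: "\<theta> = t\<^sup>2" and t: "0 < t" "t < 1" using \<theta> by (auto simp: t_def)
  then have "t ^ (m + 1) + t ^ m = 1" using L_sq_eq_L_Suc_iff[OF t assms(1)] \<theta> by simp
  then have "t = \<phi>" using power_Suc_add_power_inj[of t \<phi> m] t(1) assms(2) \<phi>_root by simp
  then show "\<theta> = \<phi>\<^sup>2" using \<theta>_eq by simp
qed

end
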